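(* Let $\{Q_j\}_{j=0}^N$ be a finite collection of cubes in $\mathbb{R}^n$. For all $\delta\in(0,1)$, \[ \Big|\bigcup_{j=0}^N(1+\delta)Q_j\setminus\bigcup_{j=0}^N Q_j\Big|\lesssim_n \delta\,\Big|\bigcup_{j=0}^N Q_j\Big|. \] In particular, if $\{Q_j\}_{j=0}^N$ is a satellite configuration of cubes with center $Q_0$, then the left-hand side is $\lesssim_n\delta|Q_0|$.
   Context: Cubes are axis-parallel cubes in $\mathbb{R}^n$; $cQ$ denotes the concentric dilate of $Q$ by factor $c>0$, $r_Q$ the sidelength of $Q$, and $|\cdot|$ Lebesgue measure. A finite collection $\{Q_j\}_{j=0}^N$ is a satellite configuration of cubes with center $Q_0$ if $Q_j\cap Q_0\neq\emptyset$ and $r_{Q_j}\le r_{Q_0}$ for all $j\in\{1,\dots,N\}$. $A\lesssim_n B$ means $A\le C_nB$ with $C_n$ depending only on $n$. *)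

theory Defs
  imports "HOL-Analysis.Analysis"
begin

text \<open>Axis-parallel (closed) cube with center c and sidelength r. The concentric
dilate of this cube by a factor t > 0 is cube c (t * r).\<close>
definition cube :: "'a::euclidean_space \<Rightarrow> real \<Rightarrow> 'a set" where
  "cube c r = cbox (c - (r / 2) *\<^sub>R One) (c + (r / 2) *\<^sub>R One)"

definition satellite_config :: "nat \<Rightarrow> (nat \<Rightarrow> 'a::euclidean_space) \<Rightarrow> (nat \<Rightarrow> real) \<Rightarrow> bool" where
  "satellite_config N x r \<longleftrightarrow>
     (\<forall>j\<in>{1..N}. cube (x j) (r j) \<inter> cube (x 0) (r 0) \<noteq> {} \<and> r j \<le> r 0)"

end

theory Submission
  imports Defs
begin

text \<open>Dilate the cubes one coordinate direction at a time. By Fubini, dilating every cube by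
  \<open>1 + \<delta>\<close> in a single direction is a one-dimensional question on each line parallel to it:
  there the union of the cubes is a finite union of intervals, and dilating intervals about their
  centres adds at most \<open>\<delta>\<close> times the length of their union (overlapping intervals may be
  replaced by their hull, which keeps the union and only enlarges the dilated union; for disjoint
  intervals the bound is an equality). Hence each direction multiplies the measure of the union by at
  most \<open>1 + \<delta>\<close>, and after all \<open>n\<close> directions the new part has measure at most
  \<open>((1 + \<delta>)\<^sup>n - 1) |\<Union>Q\<^sub>j| \<le> (2\<^sup>n - 1) \<delta> |\<Union>Q\<^sub>j|\<close>. In a satellite configuration all
  cubes lie in \<open>3 Q\<^sub>0\<close>.\<close>

section \<open>Dilating finitely many intervals\<close>

lemma overlapping_cballs_hull:
  fixes a b r s :: real
  assumes "cball a r \<inter> cball b s \<noteq> {}"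
  obtains m \<mu> where "cball m \<mu> = cball a r \<union> cball b s"
    "\<And>d. 0 \<le> d \<Longrightarrow> cball a ((1 + d) * r) \<union> cball b ((1 + d) * s) \<subseteq> cball m ((1 + d) * \<mu>)"
proof
  define lo where "lo = min (a - r) (b - s)"
  define hi where "hi = max (a + r) (b + s)"
  define m where "m = (lo + hi) / 2"
  define \<mu> where "\<mu> = (hi - lo) / 2"
  have hull: "m - \<mu> = lo" "m + \<mu> = hi"
    by (simp_all add: m_def \<mu>_def field_simps)
  have overlap: "a - r \<le> b + s" "b - s \<le> a + r"
    using assms by (auto simp: cball_eq_atLeastAtMost)
  show "cball m \<mu> = cball a r \<union> cball b s"
    using overlap by (auto simp: cball_eq_atLeastAtMost hull lo_def hi_def)
  fix d :: real
  assume "0 \<le> d"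
  have "cball c ((1 + d) * \<rho>) \<subseteq> cball m ((1 + d) * \<mu>)"
    if "lo \<le> c - \<rho>" "c + \<rho> \<le> hi" for c \<rho>
  proof -
    have "d * \<rho> \<le> d * \<mu>"
      using that \<open>0 \<le> d\<close> by (intro mult_left_mono) (auto simp: \<mu>_def)
    moreover have "(1 + d) * \<rho> = \<rho> + d * \<rho>" "(1 + d) * \<mu> = \<mu> + d * \<mu>"
      by (simp_all add: algebra_simps)
    ultimately show ?thesis
      using that hull by (simp only: cball_eq_atLeastAtMost atLeastatMost_subset_iff) linarith
  qed
  then show "cball a ((1 + d) * r) \<union> cball b ((1 + d) * s) \<subseteq> cball m ((1 + d) * \<mu>)"
    by (simp add: lo_def hi_def)
qed

lemma emeasure_cball_dilate_diff:
  fixes c \<rho> d :: real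
  assumes "0 \<le> \<rho>" "0 \<le> d"
  shows "emeasure lborel (cball c ((1 + d) * \<rho>) - cball c \<rho>) = ennreal d * emeasure lborel (cball c \<rho>)"
proof -
  have "\<rho> \<le> (1 + d) * \<rho>"
    using assms by (simp add: algebra_simps)
  then have "emeasure lborel (cball c ((1 + d) * \<rho>) - cball c \<rho>)
      = emeasure lborel (cball c ((1 + d) * \<rho>)) - emeasure lborel (cball c \<rho>)"
    using emeasure_lborel_cball_finite[of c \<rho>] by (intro emeasure_Diff) auto
  also have "\<dots> = ennreal (2 * ((1 + d) * \<rho>) - 2 * \<rho>)"
    using assms by (simp add: cball_eq_atLeastAtMost ennreal_minus algebra_simps)
  also have "2 * ((1 + d) * \<rho>) - 2 * \<rho> = d * (2 * \<rho>)"
    by (simp add: algebra_simps)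
  finally show ?thesis
    using assms by (simp add: cball_eq_atLeastAtMost ennreal_mult)
qed

lemma merge_overlapping_cballs:
  fixes c \<rho> :: "'i \<Rightarrow> real"
  assumes "i \<in> J" "k \<in> J" "i \<noteq> k" "cball (c i) (\<rho> i) \<inter> cball (c k) (\<rho> k) \<noteq> {}"
    and "\<forall>j\<in>J. 0 \<le> \<rho> j" "0 \<le> d"
  obtains c' \<rho>' where "\<forall>j\<in>J - {k}. 0 \<le> \<rho>' j"
    "(\<Union>j\<in>J - {k}. cball (c' j) (\<rho>' j)) = (\<Union>j\<in>J. cball (c j) (\<rho> j))"
    "(\<Union>j\<in>J. cball (c j) ((1 + d) * \<rho> j)) \<subseteq> (\<Union>j\<in>J - {k}. cball (c' j) ((1 + d) * \<rho>' j))"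
proof -
  obtain m \<mu> where hull: "cball m \<mu> = cball (c i) (\<rho> i) \<union> cball (c k) (\<rho> k)"
    and hull_dilate: "cball (c i) ((1 + d) * \<rho> i) \<union> cball (c k) ((1 + d) * \<rho> k) \<subseteq> cball m ((1 + d) * \<mu>)"
    using overlapping_cballs_hull[OF assms(4)] assms(6) by metis
  have "0 \<le> \<mu>"
    using hull assms(4) by (metis Un_empty cball_eq_empty inf_bot_left not_le)
  have J_eq: "J - {k} = insert i (J - {i, k})"
    using assms(1-3) by auto
  show thesis
  proof
    show "\<forall>j\<in>J - {k}. 0 \<le> (\<rho>(i := \<mu>)) j"
      using assms(5) \<open>0 \<le> \<mu>\<close> by simp
    have "(\<Union>j\<in>J - {k}. cball ((c(i := m)) j) ((\<rho>(i := \<mu>)) j))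
        = cball m \<mu> \<union> (\<Union>j\<in>J - {i, k}. cball (c j) (\<rho> j))"
      unfolding J_eq by simp
    then show "(\<Union>j\<in>J - {k}. cball ((c(i := m)) j) ((\<rho>(i := \<mu>)) j)) = (\<Union>j\<in>J. cball (c j) (\<rho> j))"
      unfolding hull using assms(1,2) by blast
    have "(\<Union>j\<in>J - {k}. cball ((c(i := m)) j) ((1 + d) * (\<rho>(i := \<mu>)) j))
        = cball m ((1 + d) * \<mu>) \<union> (\<Union>j\<in>J - {i, k}. cball (c j) ((1 + d) * \<rho> j))"
      unfolding J_eq by simp
    then show "(\<Union>j\<in>J. cball (c j) ((1 + d) * \<rho> j))
        \<subseteq> (\<Union>j\<in>J - {k}. cball ((c(i := m)) j) ((1 + d) * (\<rho>(i := \<mu>)) j))"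
      using assms(1,2) hull_dilate by blast
  qed
qed

lemma emeasure_Union_cball_dilate_diff_disjoint:
  fixes c \<rho> :: "'i \<Rightarrow> real"
  assumes "finite J" "\<forall>j\<in>J. 0 \<le> \<rho> j" "0 \<le> d" "disjoint_family_on (\<lambda>j. cball (c j) (\<rho> j)) J"
  shows "emeasure lborel ((\<Union>j\<in>J. cball (c j) ((1 + d) * \<rho> j)) - (\<Union>j\<in>J. cball (c j) (\<rho> j)))
    \<le> ennreal d * emeasure lborel (\<Union>j\<in>J. cball (c j) (\<rho> j))"
proof -
  have "emeasure lborel ((\<Union>j\<in>J. cball (c j) ((1 + d) * \<rho> j)) - (\<Union>j\<in>J. cball (c j) (\<rho> j)))
      \<le> emeasure lborel (\<Union>j\<in>J. cball (c j) ((1 + d) * \<rho> j) - cball (c j) (\<rho> j))"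
    using assms(1) by (intro emeasure_mono) auto
  also have "\<dots> \<le> (\<Sum>j\<in>J. emeasure lborel (cball (c j) ((1 + d) * \<rho> j) - cball (c j) (\<rho> j)))"
    using assms(1) by (intro emeasure_subadditive_finite) auto
  also have "\<dots> = (\<Sum>j\<in>J. ennreal d * emeasure lborel (cball (c j) (\<rho> j)))"
    using assms(2,3) by (intro sum.cong refl emeasure_cball_dilate_diff) auto
  also have "\<dots> = ennreal d * (\<Sum>j\<in>J. emeasure lborel (cball (c j) (\<rho> j)))"
    by (simp add: sum_distrib_left)
  also have "(\<Sum>j\<in>J. emeasure lborel (cball (c j) (\<rho> j))) = emeasure lborel (\<Union>j\<in>J. cball (c j) (\<rho> j))"
    using assms(1,4) by (intro sum_emeasure) auto
  finally show ?thesis .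
qed

lemma emeasure_Union_cball_dilate_diff_le:
  fixes c \<rho> :: "'i \<Rightarrow> real"
  assumes "finite J" "\<forall>j\<in>J. 0 \<le> \<rho> j" "0 \<le> d"
  shows "emeasure lborel ((\<Union>j\<in>J. cball (c j) ((1 + d) * \<rho> j)) - (\<Union>j\<in>J. cball (c j) (\<rho> j)))
    \<le> ennreal d * emeasure lborel (\<Union>j\<in>J. cball (c j) (\<rho> j))"
  using assms(1,2)
proof (induction "card J" arbitrary: J c \<rho> rule: less_induct)
  case less
  show ?case
  proof (cases "disjoint_family_on (\<lambda>j. cball (c j) (\<rho> j)) J")
    case True
    with less.prems assms(3) show ?thesis
      by (rule emeasure_Union_cball_dilate_diff_disjoint)
  next
    case False
    then obtain i k where ik: "i \<in> J" "k \<in> J" "i \<noteq> k"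
      and overlap: "cball (c i) (\<rho> i) \<inter> cball (c k) (\<rho> k) \<noteq> {}"
      unfolding disjoint_family_on_def by blast
    obtain c' \<rho>' where "\<forall>j\<in>J - {k}. 0 \<le> \<rho>' j"
      and same_union: "(\<Union>j\<in>J - {k}. cball (c' j) (\<rho>' j)) = (\<Union>j\<in>J. cball (c j) (\<rho> j))"
      and larger_dilate: "(\<Union>j\<in>J. cball (c j) ((1 + d) * \<rho> j)) \<subseteq> (\<Union>j\<in>J - {k}. cball (c' j) ((1 + d) * \<rho>' j))"
      by (rule merge_overlapping_cballs[OF ik overlap less.prems(2) assms(3)])
    have "emeasure lborel ((\<Union>j\<in>J. cball (c j) ((1 + d) * \<rho> j)) - (\<Union>j\<in>J. cball (c j) (\<rho> j)))
        \<le> emeasure lborel ((\<Union>j\<in>J - {k}. cball (c' j) ((1 + d) * \<rho>' j)) - (\<Union>j\<in>J - {k}. cball (c' j) (\<rho>' j)))"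
      unfolding same_union using larger_dilate less.prems(1)
      by (intro emeasure_mono sets.Diff sets.finite_UN) auto
    also have "\<dots> \<le> ennreal d * emeasure lborel (\<Union>j\<in>J - {k}. cball (c' j) (\<rho>' j))"
      using card_Diff1_less[OF less.prems(1) ik(2)] finite_Diff[OF less.prems(1)] \<open>\<forall>j\<in>J - {k}. 0 \<le> \<rho>' j\<close>
      by (rule less.hyps)
    finally show ?thesis
      unfolding same_union .
  qed
qed

section \<open>Dilating unions of boxes one coordinate at a time\<close>

text \<open>For \<open>A = Basis\<close>, box unions are the preimages of unions of cubes under the map
  \<open>f \<mapsto> \<Sum>b\<in>Basis. f b *\<^sub>R b\<close>, which carries \<open>\<Pi>\<^sub>M b\<in>Basis. lborel\<close> to \<open>lborel\<close>.\<close>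

definition box_union :: "'b set \<Rightarrow> 'j set \<Rightarrow> ('j \<Rightarrow> 'b \<Rightarrow> real) \<Rightarrow> ('j \<Rightarrow> 'b \<Rightarrow> real) \<Rightarrow> ('b \<Rightarrow> real) set" where
  "box_union A J c w = {f. \<exists>j\<in>J. \<forall>b\<in>A. f b \<in> cball (c j b) (w j b)}"

definition dilate_coords :: "real \<Rightarrow> 'b set \<Rightarrow> ('j \<Rightarrow> 'b \<Rightarrow> real) \<Rightarrow> 'j \<Rightarrow> 'b \<Rightarrow> real" where
  "dilate_coords d S w = (\<lambda>j b. if b \<in> S then (1 + d) * w j b else w j b)"

lemma sets_box_union:
  assumes "finite A" "finite J"
  shows "box_union A J c w \<inter> space (PiM A (\<lambda>_. lborel)) \<in> sets (PiM A (\<lambda>_. lborel))"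
proof -
  have "box_union A J c w \<inter> space (PiM A (\<lambda>_. lborel))
      = {f \<in> space (PiM A (\<lambda>_. lborel)). \<exists>j\<in>J. \<forall>b\<in>A. dist (c j b) (f b) \<le> w j b}"
    by (auto simp: box_union_def)
  also have "\<dots> \<in> sets (PiM A (\<lambda>_. lborel))"
    using assms by measurable
  finally show ?thesis .
qed

lemma mem_box_union_fun_upd:
  assumes "k \<in> A"
  shows "x(k := y) \<in> box_union A J c w
    \<longleftrightarrow> y \<in> (\<Union>j\<in>{j\<in>J. \<forall>b\<in>A - {k}. x b \<in> cball (c j b) (w j b)}. cball (c j k) (w j k))"
  using assms by (auto simp: box_union_def)

lemma nn_integral_box_union_slice_dilate_le:
  assumes "k \<in> A" "finite J" "\<forall>j\<in>J. \<forall>b\<in>A. 0 \<le> w j b" "0 \<le> d"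
  shows "(\<integral>\<^sup>+y. indicator (box_union A J c (dilate_coords d {k} w) - box_union A J c w) (x(k := y)) \<partial>lborel)
    \<le> (\<integral>\<^sup>+y. ennreal d * indicator (box_union A J c w) (x(k := y)) \<partial>lborel)"
proof -
  define Jx where "Jx = {j\<in>J. \<forall>b\<in>A - {k}. x b \<in> cball (c j b) (w j b)}"
  let ?I = "\<Union>j\<in>Jx. cball (c j k) (w j k)"
  let ?D = "\<Union>j\<in>Jx. cball (c j k) ((1 + d) * w j k)"
  have Jx_dilate: "Jx = {j\<in>J. \<forall>b\<in>A - {k}. x b \<in> cball (c j b) (dilate_coords d {k} w j b)}"
    by (simp add: Jx_def dilate_coords_def)
  have slice: "x(k := y) \<in> box_union A J c w \<longleftrightarrow> y \<in> ?I" for y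
    unfolding Jx_def using assms(1) by (rule mem_box_union_fun_upd)
  have slice_dilate: "x(k := y) \<in> box_union A J c (dilate_coords d {k} w) \<longleftrightarrow> y \<in> ?D" for y
    unfolding Jx_dilate mem_box_union_fun_upd[OF assms(1)] by (simp add: dilate_coords_def)
  have "finite Jx" "\<forall>j\<in>Jx. 0 \<le> w j k"
    using assms(1-3) by (auto simp: Jx_def)
  then have "emeasure lborel (?D - ?I) \<le> ennreal d * emeasure lborel ?I"
    using assms(4) by (rule emeasure_Union_cball_dilate_diff_le)
  moreover have "indicator (box_union A J c (dilate_coords d {k} w) - box_union A J c w) (x(k := y))
      = (indicator (?D - ?I) y :: ennreal)"
    "indicator (box_union A J c w) (x(k := y)) = (indicator ?I y :: ennreal)" for y
    by (simp_all add: indicator_def slice slice_dilate)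
  moreover have "?I \<in> sets lborel" "?D \<in> sets lborel"
    using \<open>finite Jx\<close> by auto
  ultimately show ?thesis
    by (simp add: nn_integral_cmult_indicator)
qed

lemma emeasure_box_union_dilate_coord_le:
  assumes A: "finite A" "k \<in> A" and J: "finite J" and w: "\<forall>j\<in>J. \<forall>b\<in>A. 0 \<le> w j b" and "0 \<le> d"
  defines "M \<equiv> PiM A (\<lambda>_. lborel :: real measure)"
  shows "emeasure M ((box_union A J c (dilate_coords d {k} w) - box_union A J c w) \<inter> space M)
    \<le> ennreal d * emeasure M (box_union A J c w \<inter> space M)"
proof -
  interpret product_sigma_finite "\<lambda>_. lborel :: real measure" ..
  let ?V = "box_union A J c w"
  let ?G = "box_union A J c (dilate_coords d {k} w) - ?V"
  define A' where "A' = A - {k}"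
  have A_eq: "A = insert k A'" and "finite A'" "k \<notin> A'"
    using A by (auto simp: A'_def)
  have sets_V: "?V \<inter> space M \<in> sets M" and "box_union A J c (dilate_coords d {k} w) \<inter> space M \<in> sets M"
    unfolding M_def by (rule sets_box_union[OF A(1) J])+
  then have sets_G: "?G \<inter> space M \<in> sets M"
    by (metis Diff_Int_distrib2 sets.Diff)
  have "emeasure M (?G \<inter> space M) = (\<integral>\<^sup>+f. indicator ?G f \<partial>M)"
    using sets_G by (simp add: nn_integral_indicator')
  also have "\<dots> = (\<integral>\<^sup>+x. \<integral>\<^sup>+y. indicator ?G (x(k := y)) \<partial>lborel \<partial>PiM A' (\<lambda>_. lborel))"
    using sets_G \<open>finite A'\<close> \<open>k \<notin> A'\<close> unfolding M_def A_eq
    by (intro product_nn_integral_insert) (auto simp: borel_measurable_indicator_iff)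
  also have "\<dots> \<le> (\<integral>\<^sup>+x. \<integral>\<^sup>+y. ennreal d * indicator ?V (x(k := y)) \<partial>lborel \<partial>PiM A' (\<lambda>_. lborel))"
    by (rule nn_integral_mono, rule nn_integral_box_union_slice_dilate_le[OF A(2) J w \<open>0 \<le> d\<close>])
  also have "\<dots> = (\<integral>\<^sup>+f. ennreal d * indicator ?V f \<partial>M)"
    using sets_V \<open>finite A'\<close> \<open>k \<notin> A'\<close> unfolding M_def A_eq
    by (intro product_nn_integral_insert[symmetric])
      (auto intro!: borel_measurable_times_ennreal simp: borel_measurable_indicator_iff)
  also have "\<dots> = ennreal d * emeasure M (?V \<inter> space M)"
    using sets_V by (simp add: nn_integral_cmult nn_integral_indicator' borel_measurable_indicator_iff)
  finally show ?thesis .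
qed

lemma emeasure_Diff_le_add:
  assumes "A \<in> sets M" "B \<in> sets M" "C \<in> sets M"
  shows "emeasure M (A - C) \<le> emeasure M (A - B) + emeasure M (B - C)"
proof -
  have "emeasure M (A - C) \<le> emeasure M ((A - B) \<union> (B - C))"
    using assms by (intro emeasure_mono) auto
  also have "\<dots> \<le> emeasure M (A - B) + emeasure M (B - C)"
    using assms by (intro emeasure_subadditive) auto
  finally show ?thesis .
qed

lemma dilate_coords_empty [simp]: "dilate_coords d {} w = w"
  by (simp add: dilate_coords_def)

lemma dilate_coords_insert:
  "k \<notin> S \<Longrightarrow> dilate_coords d (insert k S) w = dilate_coords d {k} (dilate_coords d S w)"
  by (auto simp: dilate_coords_def fun_eq_iff)

lemma emeasure_box_union_dilate_coords_le:
  assumes A: "finite A" "S \<subseteq> A" and J: "finite J" and w: "\<forall>j\<in>J. \<forall>b\<in>A. 0 \<le> w j b" and "0 \<le> d"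
  defines "M \<equiv> PiM A (\<lambda>_. lborel :: real measure)"
  shows "emeasure M ((box_union A J c (dilate_coords d S w) - box_union A J c w) \<inter> space M)
    \<le> ennreal ((1 + d) ^ card S - 1) * emeasure M (box_union A J c w \<inter> space M)"
proof -
  have "finite S"
    using A finite_subset by blast
  then show ?thesis
    using A(2)
  proof (induction S rule: finite_induct)
    case empty
    then show ?case
      by simp
  next
    case (insert k S)
    define V where "V T = box_union A J c (dilate_coords d T w) \<inter> space M" for T
    define q where "q = (1 + d) ^ card S - 1"
    have "0 \<le> q"
      using \<open>0 \<le> d\<close> by (simp add: q_def)
    have sets_V: "V T \<in> sets M" for T
      unfolding V_def M_def by (rule sets_box_union[OF A(1) J])
    have IH: "emeasure M (V S - V {}) \<le> ennreal q * emeasure M (V {})"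
      using insert.IH insert.prems by (simp add: V_def q_def Diff_Int_distrib2)
    have "\<forall>j\<in>J. \<forall>b\<in>A. 0 \<le> dilate_coords d S w j b"
      using w \<open>0 \<le> d\<close> by (simp add: dilate_coords_def)
    with insert.prems have "emeasure M ((box_union A J c (dilate_coords d {k} (dilate_coords d S w))
        - box_union A J c (dilate_coords d S w)) \<inter> space M)
      \<le> ennreal d * emeasure M (box_union A J c (dilate_coords d S w) \<inter> space M)"
      unfolding M_def using A(1) J \<open>0 \<le> d\<close> by (intro emeasure_box_union_dilate_coord_le) auto
    then have step: "emeasure M (V (insert k S) - V S) \<le> ennreal d * emeasure M (V S)"
      by (simp only: V_def dilate_coords_insert[OF insert.hyps(2)] Diff_Int_distrib2)
    have "emeasure M (V S) \<le> emeasure M (V {}) + emeasure M (V S - V {})"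
      using sets_V by (intro order_trans[OF emeasure_mono emeasure_subadditive]) auto
    also have "\<dots> \<le> emeasure M (V {}) + ennreal q * emeasure M (V {})"
      using IH by (rule add_left_mono)
    also have "\<dots> = ennreal (1 + q) * emeasure M (V {})"
      using \<open>0 \<le> q\<close> by (simp add: distrib_right)
    finally have V_S: "emeasure M (V S) \<le> ennreal (1 + q) * emeasure M (V {})" .
    have "emeasure M (V (insert k S) - V {}) \<le> emeasure M (V (insert k S) - V S) + emeasure M (V S - V {})"
      by (rule emeasure_Diff_le_add[OF sets_V sets_V sets_V])
    also have "\<dots> \<le> ennreal d * (ennreal (1 + q) * emeasure M (V {})) + ennreal q * emeasure M (V {})"
      using step V_S IH by (intro add_mono order_trans[OF step] mult_left_mono) auto
    also have "\<dots> = ennreal (d * (1 + q) + q) * emeasure M (V {})"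
      using \<open>0 \<le> d\<close> \<open>0 \<le> q\<close> by (simp add: ennreal_mult distrib_right mult.assoc)
    also have "d * (1 + q) + q = (1 + d) ^ card (insert k S) - 1"
      using insert.hyps by (simp add: q_def algebra_simps)
    finally show ?case
      by (simp add: V_def Diff_Int_distrib2)
  qed
qed

section \<open>Unions of cubes\<close>

lemma mem_cube_iff: "y \<in> cube c r \<longleftrightarrow> (\<forall>b\<in>Basis. y \<bullet> b \<in> cball (c \<bullet> b) (r / 2))"
  by (simp add: cube_def mem_box cball_eq_atLeastAtMost inner_diff_left inner_add_left)

lemma sets_cube: "cube c r \<in> sets borel"
  by (simp add: cube_def)

lemma bounded_cube: "bounded (cube c r)"
  by (simp add: cube_def)

lemma measure_cube:
  fixes c :: "'a::euclidean_space"
  assumes "0 \<le> s"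
  shows "measure lebesgue (cube c s) = s ^ DIM('a)"
  using assms by (simp add: cube_def measure_lborel_cbox_eq inner_diff_left inner_add_left)

lemma box_union_dilate_coords_all:
  "box_union A J c (dilate_coords d A w) = box_union A J c (\<lambda>j b. (1 + d) * w j b)"
  by (auto simp: box_union_def dilate_coords_def)

lemma vimage_Union_cube:
  fixes x :: "'i \<Rightarrow> 'a::euclidean_space"
  shows "(\<lambda>f. \<Sum>b\<in>Basis. f b *\<^sub>R b) -` (\<Union>j\<in>J. cube (x j) (s j))
    = box_union Basis J (\<lambda>j b. x j \<bullet> b) (\<lambda>j b. s j / 2)"
proof -
  have "(\<Sum>b\<in>Basis. f b *\<^sub>R b) \<bullet> i = f i" if "i \<in> (Basis :: 'a set)" for f i
    using that by (simp add: inner_sum_left inner_Basis if_distrib cong: if_cong)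
  then have "(\<Sum>b\<in>Basis. f b *\<^sub>R b) \<in> cube (x j) (s j) \<longleftrightarrow> (\<forall>b\<in>Basis. f b \<in> cball (x j \<bullet> b) (s j / 2))"
    for f j
    unfolding mem_cube_iff by (metis (no_types, lifting))
  then show ?thesis
    unfolding box_union_def by blast
qed

lemma emeasure_lborel_eq_PiM_Basis:
  fixes X :: "'a::euclidean_space set"
  assumes "X \<in> sets borel"
  shows "emeasure lborel X
    = emeasure (PiM Basis (\<lambda>_. lborel)) ((\<lambda>f. \<Sum>b\<in>Basis. f b *\<^sub>R b) -` X \<inter> space (PiM Basis (\<lambda>_. lborel)))"
proof -
  have "(\<lambda>f. \<Sum>b\<in>Basis. f b *\<^sub>R (b::'a)) \<in> measurable (PiM Basis (\<lambda>_. lborel)) borel"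
    by measurable
  then show ?thesis
    using assms by (subst lborel_eq) (simp add: emeasure_distr)
qed

lemma emeasure_Union_cube_dilate_diff_le:
  fixes x :: "'i \<Rightarrow> 'a::euclidean_space"
  assumes "finite J" "\<forall>j\<in>J. 0 \<le> r j" "0 \<le> \<delta>"
  shows "emeasure lborel ((\<Union>j\<in>J. cube (x j) ((1 + \<delta>) * r j)) - (\<Union>j\<in>J. cube (x j) (r j)))
    \<le> ennreal ((1 + \<delta>) ^ DIM('a) - 1) * emeasure lborel (\<Union>j\<in>J. cube (x j) (r j))"
proof -
  let ?M = "PiM Basis (\<lambda>_::'a. lborel :: real measure)"
  let ?c = "\<lambda>j b. x j \<bullet> b"
  let ?w = "\<lambda>j (b::'a). r j / 2"
  have sets_Union: "(\<Union>j\<in>J. cube (x j) (s j)) \<in> sets borel" for s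
    using assms(1) by (intro sets.finite_UN sets_cube)
  have "emeasure lborel ((\<Union>j\<in>J. cube (x j) ((1 + \<delta>) * r j)) - (\<Union>j\<in>J. cube (x j) (r j)))
      = emeasure ?M ((box_union Basis J ?c (dilate_coords \<delta> Basis ?w) - box_union Basis J ?c ?w) \<inter> space ?M)"
    using sets_Union by (simp add: emeasure_lborel_eq_PiM_Basis vimage_Diff vimage_Union_cube box_union_dilate_coords_all)
  also have "\<dots> \<le> ennreal ((1 + \<delta>) ^ DIM('a) - 1) * emeasure ?M (box_union Basis J ?c ?w \<inter> space ?M)"
    using assms by (intro emeasure_box_union_dilate_coords_le) auto
  also have "emeasure ?M (box_union Basis J ?c ?w \<inter> space ?M) = emeasure lborel (\<Union>j\<in>J. cube (x j) (r j))"
    using sets_Union by (simp add: emeasure_lborel_eq_PiM_Basis vimage_Union_cube)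
  finally show ?thesis .
qed

lemma measure_Union_cube_dilate_diff_le:
  fixes x :: "'i \<Rightarrow> 'a::euclidean_space"
  assumes "finite J" "\<forall>j\<in>J. 0 \<le> r j" "0 \<le> \<delta>"
  shows "measure lebesgue ((\<Union>j\<in>J. cube (x j) ((1 + \<delta>) * r j)) - (\<Union>j\<in>J. cube (x j) (r j)))
    \<le> ((1 + \<delta>) ^ DIM('a) - 1) * measure lebesgue (\<Union>j\<in>J. cube (x j) (r j))"
proof -
  define U where "U = (\<Union>j\<in>J. cube (x j) (r j))"
  define U' where "U' = (\<Union>j\<in>J. cube (x j) ((1 + \<delta>) * r j))"
  have "U \<in> sets borel"
    unfolding U_def using assms(1) by (intro sets.finite_UN sets_cube)
  have "U' \<in> sets borel"
    unfolding U'_def using assms(1) by (intro sets.finite_UN sets_cube)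
  have "bounded U"
    unfolding U_def using assms(1) by (intro bounded_UN ballI bounded_cube)
  then have "emeasure lborel U < \<infinity>"
    by (rule emeasure_bounded_finite)
  moreover have "0 \<le> (1 + \<delta>) ^ DIM('a) - 1"
    using assms(3) by simp
  ultimately have "enn2real (emeasure lborel (U' - U)) \<le> enn2real (ennreal ((1 + \<delta>) ^ DIM('a) - 1) * emeasure lborel U)"
    using emeasure_Union_cube_dilate_diff_le[OF assms, of x]
    by (intro enn2real_mono) (auto simp: U_def U'_def ennreal_mult_less_top)
  then show ?thesis
    using \<open>U \<in> sets borel\<close> \<open>U' \<in> sets borel\<close> \<open>0 \<le> (1 + \<delta>) ^ DIM('a) - 1\<close>
    by (simp add: U_def[symmetric] U'_def[symmetric] measure_def enn2real_mult sets.Diff)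
qed

lemma one_plus_power_minus_one_le:
  fixes \<delta> :: real
  assumes "0 \<le> \<delta>" "\<delta> \<le> 1"
  shows "(1 + \<delta>) ^ n - 1 \<le> (2 ^ n - 1) * \<delta>"
proof (induction n)
  case 0
  then show ?case
    by simp
next
  case (Suc n)
  have "(1 + \<delta>) ^ Suc n - 1 = (1 + \<delta>) * ((1 + \<delta>) ^ n - 1) + \<delta>"
    by (simp add: algebra_simps)
  also have "\<dots> \<le> 2 * ((2 ^ n - 1) * \<delta>) + \<delta>"
    using Suc.IH assms by (intro add_right_mono mult_mono) auto
  also have "\<dots> = (2 ^ Suc n - 1) * \<delta>"
    by (simp add: algebra_simps)
  finally show ?case .
qed

section \<open>Satellite configurations\<close>

lemma satellite_cube_subset:
  assumes "satellite_config N x r" "j \<le> N" "0 \<le> r 0"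
  shows "cube (x j) (r j) \<subseteq> cube (x 0) (3 * r 0)"
proof
  obtain p where p: "p \<in> cube (x j) (r j)" "p \<in> cube (x 0) (r 0)" and "r j \<le> r 0"
  proof (cases "j = 0")
    case True
    then show ?thesis
      using assms(3) that[of "x 0"] by (simp add: mem_cube_iff)
  next
    case False
    with assms(1,2) show ?thesis
      using that unfolding satellite_config_def by fastforce
  qed
  fix y
  assume y: "y \<in> cube (x j) (r j)"
  have "dist (x 0 \<bullet> b) (y \<bullet> b) \<le> 3 * r 0 / 2" if "b \<in> Basis" for b
  proof -
    have "dist (x j \<bullet> b) (y \<bullet> b) \<le> r j / 2" "dist (x j \<bullet> b) (p \<bullet> b) \<le> r j / 2"
      "dist (x 0 \<bullet> b) (p \<bullet> b) \<le> r 0 / 2"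
      using y p that by (auto simp: mem_cube_iff)
    then show ?thesis
      using \<open>r j \<le> r 0\<close> dist_triangle[of "x 0 \<bullet> b" "y \<bullet> b" "p \<bullet> b"] dist_triangle[of "p \<bullet> b" "y \<bullet> b" "x j \<bullet> b"]
      by (simp add: dist_commute)
  qed
  then show "y \<in> cube (x 0) (3 * r 0)"
    by (simp add: mem_cube_iff)
qed

lemma measure_Union_satellite_le:
  fixes x :: "nat \<Rightarrow> 'a::euclidean_space"
  assumes "satellite_config N x r" "0 \<le> r 0"
  shows "measure lebesgue (\<Union>j\<le>N. cube (x j) (r j)) \<le> 3 ^ DIM('a) * measure lebesgue (cube (x 0) (r 0))"
proof -
  have "measure lebesgue (\<Union>j\<le>N. cube (x j) (r j)) \<le> measure lebesgue (cube (x 0) (3 * r 0))"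
  proof (rule measure_mono_fmeasurable)
    show "(\<Union>j\<le>N. cube (x j) (r j)) \<subseteq> cube (x 0) (3 * r 0)"
      using satellite_cube_subset[OF assms(1) _ assms(2)] by blast
    show "(\<Union>j\<le>N. cube (x j) (r j)) \<in> sets lebesgue"
      by (intro sets.finite_UN) (auto simp: cube_def)
    show "cube (x 0) (3 * r 0) \<in> lmeasurable"
      by (simp add: cube_def)
  qed
  also have "\<dots> = 3 ^ DIM('a) * measure lebesgue (cube (x 0) (r 0))"
    using assms(2) measure_cube[of "3 * r 0" "x 0"] measure_cube[of "r 0" "x 0"]
    by (simp add: power_mult_distrib)
  finally show ?thesis .
qed

theorem lemma3p3:
  shows "\<exists>C>0. \<forall>(N::nat) (x::nat \<Rightarrow> 'a::euclidean_space) (r::nat \<Rightarrow> real) (\<delta>::real).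
     (\<forall>j\<le>N. 0 < r j) \<longrightarrow> 0 < \<delta> \<longrightarrow> \<delta> < 1 \<longrightarrow>
       measure lebesgue ((\<Union>j\<le>N. cube (x j) ((1 + \<delta>) * r j)) - (\<Union>j\<le>N. cube (x j) (r j)))
         \<le> C * \<delta> * measure lebesgue (\<Union>j\<le>N. cube (x j) (r j))
       \<and> (satellite_config N x r \<longrightarrow>
          measure lebesgue ((\<Union>j\<le>N. cube (x j) ((1 + \<delta>) * r j)) - (\<Union>j\<le>N. cube (x j) (r j)))
            \<le> C * \<delta> * measure lebesgue (cube (x 0) (r 0)))"
proof (intro exI[of _ "6 ^ DIM('a)"] conjI allI impI)
  show "(0::real) < 6 ^ DIM('a)"
    by simp
  fix N :: nat and x :: "nat \<Rightarrow> 'a" and r :: "nat \<Rightarrow> real" and \<delta> :: real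
  assume r: "\<forall>j\<le>N. 0 < r j" and \<delta>: "0 < \<delta>" "\<delta> < 1"
  define U where "U = (\<Union>j\<le>N. cube (x j) (r j))"
  define U' where "U' = (\<Union>j\<le>N. cube (x j) ((1 + \<delta>) * r j))"
  have "measure lebesgue (U' - U) \<le> ((1 + \<delta>) ^ DIM('a) - 1) * measure lebesgue U"
    unfolding U_def U'_def using r \<delta> by (intro measure_Union_cube_dilate_diff_le) auto
  also have "\<dots> \<le> (2 ^ DIM('a) - 1) * \<delta> * measure lebesgue U"
    using \<delta> by (intro mult_right_mono one_plus_power_minus_one_le) auto
  also have "\<dots> \<le> 2 ^ DIM('a) * \<delta> * measure lebesgue U"
    using \<delta> by (intro mult_right_mono) auto
  finally have diff_le: "measure lebesgue (U' - U) \<le> 2 ^ DIM('a) * \<delta> * measure lebesgue U" .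
  also have "\<dots> \<le> 6 ^ DIM('a) * \<delta> * measure lebesgue U"
    using \<delta> by (intro mult_right_mono power_mono) auto
  finally show "measure lebesgue (U' - U) \<le> 6 ^ DIM('a) * \<delta> * measure lebesgue U" .
  assume "satellite_config N x r"
  then have "measure lebesgue U \<le> 3 ^ DIM('a) * measure lebesgue (cube (x 0) (r 0))"
    unfolding U_def using r by (intro measure_Union_satellite_le) auto
  then have "measure lebesgue (U' - U) \<le> 2 ^ DIM('a) * \<delta> * (3 ^ DIM('a) * measure lebesgue (cube (x 0) (r 0)))"
    using \<delta> by (intro order_trans[OF diff_le] mult_left_mono) auto
  also have "\<dots> = (2 * 3) ^ DIM('a) * \<delta> * measure lebesgue (cube (x 0) (r 0))"
    by (simp only: power_mult_distrib mult_ac)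
  finally show "measure lebesgue (U' - U) \<le> 6 ^ DIM('a) * \<delta> * measure lebesgue (cube (x 0) (r 0))"
    by simp
qed

end
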